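(* The unary language $\mathtt{UGAUSS}=\{a^{n^2+n}\mid n\in\mathbb{N}\}$ is recognized by some real-time deterministic $2$-counter automaton (rtD2CA).
   Context: Here $\mathbb{N}=\{0,1,2,\dots\}$. A real-time deterministic $k$-counter automaton (rtD$k$CA) is a 5-tuple $(Q,\Sigma,\delta,q_0,Q_a)$ with finite state set $Q$, initial state $q_0$, accept states $Q_a\subseteq Q$, and $k$ integer counters initially $0$. The input $w$ is read as $\cent w\$$ left to right, one symbol per step. The transition function $\delta(q,\sigma,\theta)=(q',c)$, where $\theta\in\{0,\pm\}^k$ records for each counter whether it is zero or nonzero and $c\in\{-1,0,1\}^k$, means: in state $q$ reading $\sigma$ with counter status $\theta$, move the head right, go to $q'$ and add $c$ to the counters. The input is accepted iff the machine is in an accept state after scanning $\$$. *)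

theory Defs
  imports Main
begin

datatype 'a tsym = LEnd | Sym 'a | REnd

text \<open>Counter status theta is a list of length k
  whose i-th entry is True iff counter i is nonzero; the update c is a list of length k
  with entries in {-1,0,1}.\<close>
definition rtDkCA ::
  "nat \<Rightarrow> 'q set \<Rightarrow> ('q \<Rightarrow> 'a tsym \<Rightarrow> bool list \<Rightarrow> 'q \<times> int list) \<Rightarrow> 'q \<Rightarrow> 'q set \<Rightarrow> bool" where
  "rtDkCA k Q \<delta> q0 Qa \<longleftrightarrow> finite Q \<and> q0 \<in> Q \<and> Qa \<subseteq> Q \<and>
     (\<forall>q\<in>Q. \<forall>\<sigma> \<theta>. length \<theta> = k \<longrightarrow>
        fst (\<delta> q \<sigma> \<theta>) \<in> Q \<and> length (snd (\<delta> q \<sigma> \<theta>)) = k \<and>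
        set (snd (\<delta> q \<sigma> \<theta>)) \<subseteq> {-1, 0, 1})"

definition ca_step ::
  "('q \<Rightarrow> 'a tsym \<Rightarrow> bool list \<Rightarrow> 'q \<times> int list) \<Rightarrow> 'q \<times> int list \<Rightarrow> 'a tsym \<Rightarrow> 'q \<times> int list" where
  "ca_step \<delta> cfg \<sigma> =
     (let (q, cs) = cfg; (q', c) = \<delta> q \<sigma> (map (\<lambda>x. x \<noteq> 0) cs) in (q', map2 (+) cs c))"

definition ca_accepts ::
  "nat \<Rightarrow> ('q \<Rightarrow> 'a tsym \<Rightarrow> bool list \<Rightarrow> 'q \<times> int list) \<Rightarrow> 'q \<Rightarrow> 'q set \<Rightarrow> 'a list \<Rightarrow> bool" where
  "ca_accepts k \<delta> q0 Qa w \<longleftrightarrow>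
     fst (foldl (ca_step \<delta>) (q0, replicate k 0) (LEnd # map Sym w @ [REnd])) \<in> Qa"

definition ca_language ::
  "nat \<Rightarrow> ('q \<Rightarrow> 'a tsym \<Rightarrow> bool list \<Rightarrow> 'q \<times> int list) \<Rightarrow> 'q \<Rightarrow> 'q set \<Rightarrow> 'a list set" where
  "ca_language k \<delta> q0 Qa = {w. ca_accepts k \<delta> q0 Qa w}"

text \<open>Unary alphabet {a} modelled by the type unit.\<close>
definition UGAUSS :: "unit list set" where
  "UGAUSS = {replicate (n^2 + n) () | n::nat. True}"

end

theory Submission
  imports Defs
begin

text \<open>The automaton reads the input in blocks of \<open>2n + 2\<close> letters, \<open>n = 0, 1, \<dots>\<close>, so that the
  blocks end exactly after \<open>n\<^sup>2 + n\<close> letters. At the start of block \<open>n\<close> one counter holds \<open>n + 1\<close>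
  and the other \<open>0\<close>. Within the block, letters alternately move one unit from the full counter to
  the receiving one and test whether the full counter is exhausted; when it is, the block ends
  and the counters swap roles, the receiving one being incremented once more to \<open>n + 2\<close>.
  Hence the input ends at a block boundary iff the automaton is about to transfer and its
  receiving counter is zero.\<close>

lemma pronic_decomposition: "\<exists>n j. (m::nat) = n^2 + n + j \<and> j < 2*n + 2"
proof (induction m)
  case 0
  show ?case by (intro exI[of _ 0]) simp
next
  case (Suc m)
  then obtain n j where m: "m = n^2 + n + j" and j: "j < 2*n + 2" by blast
  show ?case
  proof (cases "Suc j < 2*n + 2")
    case True
    then show ?thesis using m by (intro exI[of _ n] exI[of _ "Suc j"]) simp
  next
    case False
    then have "Suc m = (n + 1)^2 + (n + 1) + 0" using m j by (simp add: power2_eq_square)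
    then show ?thesis by (intro exI[of _ "n + 1"] exI[of _ 0]) simp
  qed
qed

lemma pronic_offset_eq_0:
  fixes n j k :: nat
  assumes "n^2 + n + j = k^2 + k" and "j < 2*n + 2"
  shows "j = 0"
proof (cases "k \<le> n")
  case True
  then have "k^2 + k \<le> n^2 + n" by (simp add: add_mono power_mono)
  then show ?thesis using assms(1) by simp
next
  case False
  then have "(n + 1)^2 + (n + 1) \<le> k^2 + k" by (intro add_mono power_mono) auto
  then show ?thesis using assms by (simp add: power2_eq_square)
qed

text \<open>State 0 is initial, 5 accepting and 6 a rejecting sink.\<close>
definition gauss_delta :: "nat \<Rightarrow> unit tsym \<Rightarrow> bool list \<Rightarrow> nat \<times> int list" where
  "gauss_delta q \<sigma> \<theta> = (case \<sigma> of
     LEnd \<Rightarrow> if q = 0 then (1, [1, 0]) else (6, [0, 0])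
   | Sym _ \<Rightarrow>
       (if q = 1 then (2, [-1, 1])
        else if q = 2 then (if \<theta>!0 then (1, [0, 0]) else (3, [0, 1]))
        else if q = 3 then (4, [1, -1])
        else if q = 4 then (if \<theta>!1 then (3, [0, 0]) else (1, [1, 0]))
        else (6, [0, 0]))
   | REnd \<Rightarrow>
       if (q = 1 \<and> \<not> \<theta>!1) \<or> (q = 3 \<and> \<not> \<theta>!0) then (5, [0, 0]) else (6, [0, 0]))"

text \<open>The configuration after \<open>n\<^sup>2 + n + j\<close> letters, \<open>j < 2n + 2\<close>. The transfer and test states are
  1, 2 in even blocks and 3, 4 in odd blocks, where the counters are swapped.\<close>
definition gauss_config :: "nat \<Rightarrow> nat \<Rightarrow> nat \<times> int list" where
  "gauss_config n j =
     (let i = int (j div 2);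
          (q, full, recv) = (if even j then (1, int n + 1 - i, i) else (2, int n - i, i + 1))
      in if even n then (q, [full, recv]) else (q + 2, [recv, full]))"

lemma gauss_step_transfer:
  "i \<le> n \<Longrightarrow> ca_step gauss_delta (gauss_config n (2*i)) (Sym ()) = gauss_config n (2*i + 1)"
  by (cases "even n") (auto simp: ca_step_def gauss_delta_def gauss_config_def Let_def)

lemma gauss_step_test:
  "i < n \<Longrightarrow> ca_step gauss_delta (gauss_config n (2*i + 1)) (Sym ()) = gauss_config n (2*i + 2)"
  by (cases "even n") (auto simp: ca_step_def gauss_delta_def gauss_config_def Let_def)

lemma gauss_step_next_block:
  "ca_step gauss_delta (gauss_config n (2*n + 1)) (Sym ()) = gauss_config (n + 1) 0"
  by (cases "even n") (auto simp: ca_step_def gauss_delta_def gauss_config_def Let_def)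

lemma gauss_step:
  assumes "j < 2*n + 2"
  shows "ca_step gauss_delta (gauss_config n j) (Sym ()) =
           (if j = 2*n + 1 then gauss_config (n + 1) 0 else gauss_config n (j + 1))"
proof -
  consider i where "j = 2*i" | i where "j = 2*i + 1"
    by (cases "even j") (auto elim: evenE oddE)
  then show ?thesis
  proof cases
    case 1
    moreover have "i \<le> n" and "2*i \<noteq> 2*n + 1"
      using assms 1 by presburger+
    ultimately show ?thesis by (simp add: gauss_step_transfer)
  next
    case 2
    then consider "i < n" | "i = n"
      using assms by linarith
    then show ?thesis
      by cases (use 2 gauss_step_test gauss_step_next_block in simp_all)
  qed
qed

lemma gauss_step_start: "ca_step gauss_delta (0, replicate 2 0) LEnd = gauss_config 0 0"
  by (simp add: ca_step_def gauss_delta_def gauss_config_def numeral_2_eq_2)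

definition gauss_run :: "nat \<Rightarrow> nat \<times> int list" where
  "gauss_run m = foldl (ca_step gauss_delta) (gauss_config 0 0) (replicate m (Sym ()))"

lemma gauss_run_Suc: "gauss_run (Suc m) = ca_step gauss_delta (gauss_run m) (Sym ())"
  unfolding gauss_run_def replicate_Suc replicate_append_same[symmetric] by simp

lemma gauss_run_within_block:
  assumes "gauss_run (n^2 + n) = gauss_config n 0" and "j < 2*n + 2"
  shows "gauss_run (n^2 + n + j) = gauss_config n j"
  using assms(2)
proof (induction j)
  case (Suc j)
  then show ?case using gauss_step[of j n] by (simp add: gauss_run_Suc)
qed (use assms(1) in simp)

lemma gauss_run_block_start: "gauss_run (n^2 + n) = gauss_config n 0"
proof (induction n)
  case 0
  then show ?case by (simp add: gauss_run_def)
next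
  case (Suc n)
  have "Suc n ^ 2 + Suc n = Suc (n^2 + n + (2*n + 1))"
    by (simp add: power2_eq_square)
  then show ?case
    using gauss_run_within_block[OF Suc.IH, of "2*n + 1"] gauss_step[of "2*n + 1" n]
    by (simp add: gauss_run_Suc)
qed

lemma gauss_run_pronic_offset:
  "j < 2*n + 2 \<Longrightarrow> gauss_run (n^2 + n + j) = gauss_config n j"
  using gauss_run_within_block gauss_run_block_start by blast

lemma gauss_accepting_config:
  "j < 2*n + 2 \<Longrightarrow> fst (ca_step gauss_delta (gauss_config n j) REnd) = 5 \<longleftrightarrow> j = 0"
  by (auto simp: ca_step_def gauss_delta_def gauss_config_def Let_def; presburger)

lemma gauss_accepts_iff:
  "ca_accepts 2 gauss_delta 0 {5} w \<longleftrightarrow> (\<exists>k. length w = k^2 + k)"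
proof -
  obtain n j where len: "length w = n^2 + n + j" and j: "j < 2*n + 2"
    using pronic_decomposition by blast
  have "map Sym w = replicate (length w) (Sym ())"
    by (induction w) auto
  then have "ca_accepts 2 gauss_delta 0 {5} w \<longleftrightarrow>
               fst (ca_step gauss_delta (gauss_run (length w)) REnd) = 5"
    by (simp add: ca_accepts_def gauss_run_def gauss_step_start)
  also have "\<dots> \<longleftrightarrow> j = 0"
    using gauss_run_pronic_offset[OF j] gauss_accepting_config[OF j] len by simp
  also have "\<dots> \<longleftrightarrow> (\<exists>k. length w = k^2 + k)"
    using pronic_offset_eq_0[OF _ j] len by auto
  finally show ?thesis .
qed

theorem theorem3:
  shows "\<exists>(Q :: nat set) \<delta> q0 Qa. rtDkCA 2 Q \<delta> q0 Qa \<and> ca_language 2 \<delta> q0 Qa = UGAUSS"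
proof (intro exI conjI)
  show "rtDkCA 2 {0..6} gauss_delta 0 {5}"
    by (auto simp: rtDkCA_def gauss_delta_def split: tsym.splits)
  have "w \<in> UGAUSS \<longleftrightarrow> (\<exists>k. length w = k^2 + k)" for w :: "unit list"
    unfolding UGAUSS_def by (fastforce intro: replicate_eqI)
  then show "ca_language 2 gauss_delta 0 {5} = UGAUSS"
    by (auto simp: ca_language_def gauss_accepts_iff)
qed

end
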